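(* A descriptive $\mathsf{MS4}$-frame $\mathfrak{G}=(Y,R,E)$ validates $\mathsf{LKur}=\mathsf{MS4}+\Box\forall\Diamond\Box p\to\Diamond\forall p$ if and only if it satisfies the local Kuroda principle: for every $x\in\operatorname{qmax}Y$ there is $y$ with $xE_Ry$ such that $E[y]\subseteq\operatorname{qmax}Y$.
   Context: $\mathsf{MS4}$ is the smallest set of formulas in the classical bimodal language $\mathcal{L}_{\Box\forall}$ containing all classical tautologies, the $\mathsf{S4}$ axioms for $\Box$, the $\mathsf{S5}$ axioms for $\forall$, and $\Box\forall p\to\forall\Box p$, closed under modus ponens, substitution, $\Box$- and $\forall$-necessitation; $\Diamond=\neg\Box\neg$. A descriptive $\mathsf{MS4}$-frame is a triple $(Y,R,E)$ where $Y$ is a Stone space (compact, Hausdorff, zero-dimensional), $R$ is a quasi-order and $E$ an equivalence relation on $Y$, both continuous (i.e., the image $R[x]=\{y:xRy\}$ is closed for each $x$ and $R^{-1}[U]$ is clopen for each clopen $U$; same for $E$), and $xEy$, $yRz$ imply there is $u$ with $xRu$ and $uEz$. Formulas are evaluated under valuations assigning clopen subsets to letters, $\Box$ via $R$, $\forall$ via $E$; validity means truth everywhere under all such valuations. $\operatorname{qmax}Y=\{x: xRy\Rightarrow yRx\}$ is the set of quasi-maximal points; $xE_Ry$ iff $xRy$ and $yRx$. *)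

theory Defs
  imports "HOL-Analysis.Analysis"
begin

datatype fm = Var nat | Bot | Imp fm fm | Box fm | All fm

definition Neg :: "fm \<Rightarrow> fm" where "Neg p = Imp p Bot"
definition Dia :: "fm \<Rightarrow> fm" where "Dia p = Neg (Box (Neg p))"
definition Ex :: "fm \<Rightarrow> fm" where "Ex p = Neg (All (Neg p))"
definition Conj :: "fm \<Rightarrow> fm \<Rightarrow> fm" where "Conj p q = Neg (Imp p (Neg q))"

text \<open>Classical tautologies: formulas true under every Boolean assignment to
  their maximal non-classical subformulas (letters, Box-formulas, All-formulas).\<close>
fun ptv :: "(fm \<Rightarrow> bool) \<Rightarrow> fm \<Rightarrow> bool" where
  "ptv v Bot = False"
| "ptv v (Imp p q) = (ptv v p \<longrightarrow> ptv v q)"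
| "ptv v p = v p"

definition taut :: "fm \<Rightarrow> bool" where "taut p \<longleftrightarrow> (\<forall>v. ptv v p)"

fun subst :: "(nat \<Rightarrow> fm) \<Rightarrow> fm \<Rightarrow> fm" where
  "subst s (Var n) = s n"
| "subst s Bot = Bot"
| "subst s (Imp p q) = Imp (subst s p) (subst s q)"
| "subst s (Box p) = Box (subst s p)"
| "subst s (All p) = All (subst s p)"

abbreviation "pp \<equiv> Var 0"
abbreviation "qq \<equiv> Var 1"

inductive_set MS4_ext :: "fm set \<Rightarrow> fm set" for Ax :: "fm set" where
  tautI: "taut p \<Longrightarrow> p \<in> MS4_ext Ax"
| K_Box: "Imp (Box (Imp pp qq)) (Imp (Box pp) (Box qq)) \<in> MS4_ext Ax"
| T_Box: "Imp (Box pp) pp \<in> MS4_ext Ax"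
| Four_Box: "Imp (Box pp) (Box (Box pp)) \<in> MS4_ext Ax"
| K_All: "Imp (All (Imp pp qq)) (Imp (All pp) (All qq)) \<in> MS4_ext Ax"
| T_All: "Imp (All pp) pp \<in> MS4_ext Ax"
| Five_All: "Imp (Ex pp) (All (Ex pp)) \<in> MS4_ext Ax"
| Left_comm: "Imp (Box (All pp)) (All (Box pp)) \<in> MS4_ext Ax"
| extra: "p \<in> Ax \<Longrightarrow> p \<in> MS4_ext Ax"
| MP: "p \<in> MS4_ext Ax \<Longrightarrow> Imp p q \<in> MS4_ext Ax \<Longrightarrow> q \<in> MS4_ext Ax"
| Subst: "p \<in> MS4_ext Ax \<Longrightarrow> subst s p \<in> MS4_ext Ax"
| NecBox: "p \<in> MS4_ext Ax \<Longrightarrow> Box p \<in> MS4_ext Ax"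
| NecAll: "p \<in> MS4_ext Ax \<Longrightarrow> All p \<in> MS4_ext Ax"

definition MS4 :: "fm set" where "MS4 = MS4_ext {}"

definition Kur_ax :: fm where
  "Kur_ax = Imp (Box (All (Dia (Box pp)))) (Dia (All pp))"

definition LKur :: "fm set" where "LKur = MS4_ext {Kur_ax}"

definition clopenin :: "'a topology \<Rightarrow> 'a set \<Rightarrow> bool" where
  "clopenin T U \<longleftrightarrow> openin T U \<and> closedin T U"

definition zero_dimensional_space :: "'a topology \<Rightarrow> bool" where
  "zero_dimensional_space T \<longleftrightarrow>
     (\<forall>U x. openin T U \<and> x \<in> U \<longrightarrow> (\<exists>C. clopenin T C \<and> x \<in> C \<and> C \<subseteq> U))"

definition stone_space :: "'a topology \<Rightarrow> bool" where
  "stone_space T \<longleftrightarrow> compact_space T \<and> Hausdorff_space T \<and> zero_dimensional_space T"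

definition continuous_rel :: "'a topology \<Rightarrow> 'a rel \<Rightarrow> bool" where
  "continuous_rel T R \<longleftrightarrow>
     (\<forall>x\<in>topspace T. closedin T (R `` {x})) \<and>
     (\<forall>U. clopenin T U \<longrightarrow> clopenin T (R\<inverse> `` U))"

definition descriptive_MS4_frame :: "'a topology \<Rightarrow> 'a rel \<Rightarrow> 'a rel \<Rightarrow> bool" where
  "descriptive_MS4_frame T R E \<longleftrightarrow>
     stone_space T \<and>
     R \<subseteq> topspace T \<times> topspace T \<and> refl_on (topspace T) R \<and> trans R \<and>
     E \<subseteq> topspace T \<times> topspace T \<and> equiv (topspace T) E \<and>
     continuous_rel T R \<and> continuous_rel T E \<and>
     (\<forall>x y z. (x, y) \<in> E \<and> (y, z) \<in> R \<longrightarrow> (\<exists>u. (x, u) \<in> R \<and> (u, z) \<in> E))"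

fun eval :: "'a topology \<Rightarrow> 'a rel \<Rightarrow> 'a rel \<Rightarrow> (nat \<Rightarrow> 'a set) \<Rightarrow> fm \<Rightarrow> 'a set" where
  "eval T R E V (Var n) = V n"
| "eval T R E V Bot = {}"
| "eval T R E V (Imp p q) = (topspace T - eval T R E V p) \<union> eval T R E V q"
| "eval T R E V (Box p) = {x \<in> topspace T. \<forall>y. (x, y) \<in> R \<longrightarrow> y \<in> eval T R E V p}"
| "eval T R E V (All p) = {x \<in> topspace T. \<forall>y. (x, y) \<in> E \<longrightarrow> y \<in> eval T R E V p}"

definition valid_in :: "'a topology \<Rightarrow> 'a rel \<Rightarrow> 'a rel \<Rightarrow> fm \<Rightarrow> bool" where
  "valid_in T R E p \<longleftrightarrow>
     (\<forall>V. (\<forall>n. clopenin T (V n)) \<longrightarrow> eval T R E V p = topspace T)"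

definition validates :: "'a topology \<Rightarrow> 'a rel \<Rightarrow> 'a rel \<Rightarrow> fm set \<Rightarrow> bool" where
  "validates T R E L \<longleftrightarrow> (\<forall>p\<in>L. valid_in T R E p)"

definition qmax :: "'a topology \<Rightarrow> 'a rel \<Rightarrow> 'a set" where
  "qmax T R = {x \<in> topspace T. \<forall>y. (x, y) \<in> R \<longrightarrow> (y, x) \<in> R}"

definition local_Kuroda :: "'a topology \<Rightarrow> 'a rel \<Rightarrow> 'a rel \<Rightarrow> bool" where
  "local_Kuroda T R E \<longleftrightarrow>
     (\<forall>x\<in>qmax T R. \<exists>y. (x, y) \<in> R \<and> (y, x) \<in> R \<and> E `` {y} \<subseteq> qmax T R)"

end

theory Submission
  imports Defs
begin

(*
  Two facts about a descriptive MS4-frame drive the proof. By compactness and Zorn's lemma every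
  point sees a quasi-maximal point, so Dia Box p holds everywhere once p contains qmax Y. And qmax Y
  is the intersection of the clopen sets containing it: for z outside qmax Y, a suitable clopen
  instance of Dia Box p --> p is true on qmax Y but false at z.

  Under the local Kuroda principle, a point x satisfying Box All Dia Box p sees a quasi-maximal m
  and then a point y in the cluster of m whose E-class consists of quasi-maximal points. Each of
  these satisfies Dia Box p, and hence p, so Dia All p holds at x. Conversely, if the Kuroda axiom
  is valid and x is quasi-maximal, then the closed sets R[x] /\ All p, for clopen p containing
  qmax Y, are nonempty and downward directed. By compactness some y lies in all of them; it is in
  the cluster of x, and E[y] is contained in qmax Y.
*)

lemma clopenin_diff: "clopenin T A \<Longrightarrow> clopenin T B \<Longrightarrow> clopenin T (A - B)"
  unfolding clopenin_def by (auto intro: openin_diff closedin_diff)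

lemma clopenin_Un: "clopenin T A \<Longrightarrow> clopenin T B \<Longrightarrow> clopenin T (A \<union> B)"
  unfolding clopenin_def by auto

lemma clopenin_Int: "clopenin T A \<Longrightarrow> clopenin T B \<Longrightarrow> clopenin T (A \<inter> B)"
  unfolding clopenin_def by auto

lemma clopenin_topspace: "clopenin T (topspace T)"
  unfolding clopenin_def by auto

lemma clopenin_empty: "clopenin T {}"
  unfolding clopenin_def by auto

lemma clopenin_subset_topspace: "clopenin T A \<Longrightarrow> A \<subseteq> topspace T"
  unfolding clopenin_def by (auto dest: openin_subset)

lemma clopenin_box:
  assumes "R \<subseteq> topspace T \<times> topspace T" "continuous_rel T R" "clopenin T A"
  shows "clopenin T {x \<in> topspace T. \<forall>y. (x, y) \<in> R \<longrightarrow> y \<in> A}"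
proof -
  have "{x \<in> topspace T. \<forall>y. (x, y) \<in> R \<longrightarrow> y \<in> A} = topspace T - R\<inverse> `` (topspace T - A)"
    using assms(1) by auto
  moreover have "clopenin T (R\<inverse> `` (topspace T - A))"
    using assms(2,3) clopenin_diff[OF clopenin_topspace] unfolding continuous_rel_def by blast
  ultimately show ?thesis
    using clopenin_diff[OF clopenin_topspace] by metis
qed

lemma compact_space_Inter_directed:
  assumes "compact_space X" and "\<F> \<noteq> {}"
    and closed: "\<And>C. C \<in> \<F> \<Longrightarrow> closedin X C" and nonempty: "\<And>C. C \<in> \<F> \<Longrightarrow> C \<noteq> {}"
    and directed: "\<And>A B. A \<in> \<F> \<Longrightarrow> B \<in> \<F> \<Longrightarrow> \<exists>C\<in>\<F>. C \<subseteq> A \<inter> B"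
  shows "\<Inter>\<F> \<noteq> {}"
proof -
  have "\<exists>C\<in>\<F>. C \<subseteq> \<Inter>\<G>" if "finite \<G>" "\<G> \<subseteq> \<F>" for \<G>
    using that
  proof (induction rule: finite_induct)
    case empty
    then show ?case
      using \<open>\<F> \<noteq> {}\<close> by blast
  next
    case (insert A \<G>)
    then obtain B where "B \<in> \<F>" "B \<subseteq> \<Inter>\<G>"
      by blast
    moreover obtain C where "C \<in> \<F>" "C \<subseteq> A \<inter> B"
      using directed[of A B] insert.prems calculation(1) by blast
    ultimately show ?case
      by blast
  qed
  then have fip: "\<Inter>\<G> \<noteq> {}" if "finite \<G>" "\<G> \<subseteq> \<F>" for \<G>
    using that nonempty by (metis subset_empty)
  then show ?thesis
    using compact_space_fip[THEN iffD1, OF \<open>compact_space X\<close>, THEN spec, of \<F>] closed fip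
    by (simp add: Ball_def)
qed

lemma qmax_successor:
  assumes "trans R" "R \<subseteq> topspace T \<times> topspace T" "m \<in> qmax T R" "(m, u) \<in> R"
  shows "u \<in> qmax T R"
  using assms unfolding qmax_def trans_def by blast

lemma compact_space_qmax_above:
  assumes "compact_space T" and refl: "refl_on (topspace T) R" and trans: "trans R"
    and R_sub: "R \<subseteq> topspace T \<times> topspace T"
    and closed: "\<forall>y\<in>topspace T. closedin T (R `` {y})" and x: "x \<in> topspace T"
  obtains m where "(x, m) \<in> R" "m \<in> qmax T R"
proof -
  let ?\<A> = "(\<lambda>y. R `` {y}) ` R `` {x}"
  have up_trans: "R `` {z} \<subseteq> R `` {y}" if "(y, z) \<in> R" for y z
    using that trans by (blast dest: transD)
  have self_in_up: "y \<in> R `` {y}" if "y \<in> topspace T" for y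
    using refl_onD[OF refl that] by blast
  \<comment> \<open>Zorn for reverse inclusion; a minimal up-set is generated by a quasi-maximal point.\<close>
  have "\<exists>M\<in>?\<A>. \<forall>X\<in>?\<A>. X \<subseteq> M \<longrightarrow> X = M"
  proof (rule predicate_Zorn)
    show "partial_order_on ?\<A> (relation_of (\<lambda>A B. B \<subseteq> A) ?\<A>)"
      by (rule partial_order_on_relation_ofI) auto
  next
    fix \<C> assume "\<C> \<in> Chains (relation_of (\<lambda>A B. B \<subseteq> A) ?\<A>)"
    then have \<C>: "\<C> \<subseteq> ?\<A>" and chain: "\<And>A B. A \<in> \<C> \<Longrightarrow> B \<in> \<C> \<Longrightarrow> A \<subseteq> B \<or> B \<subseteq> A"
      unfolding Chains_def relation_of_def by blast+
    show "\<exists>U\<in>?\<A>. \<forall>A\<in>\<C>. U \<subseteq> A"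
    proof (cases "\<C> = {}")
      case True
      then show ?thesis
        using self_in_up[OF x] by blast
    next
      case False
      have "\<Inter>\<C> \<noteq> {}"
      proof (rule compact_space_Inter_directed[OF \<open>compact_space T\<close> False])
        fix C assume "C \<in> \<C>"
        then obtain y where "y \<in> topspace T" "C = R `` {y}"
          using \<C> R_sub by blast
        then show "closedin T C" "C \<noteq> {}"
          using closed self_in_up by blast+
      next
        fix A B assume "A \<in> \<C>" "B \<in> \<C>"
        then show "\<exists>C\<in>\<C>. C \<subseteq> A \<inter> B"
          using chain[of A B] by (metis Int_absorb1 Int_absorb2 order_refl)
      qed
      then obtain z where z: "\<And>A. A \<in> \<C> \<Longrightarrow> z \<in> A"
        by blast
      obtain y where "(x, y) \<in> R" "R `` {y} \<in> \<C>"
        using False \<C> by blast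
      then have "(x, z) \<in> R"
        using z trans by (blast dest: transD)
      moreover have "R `` {z} \<subseteq> A" if "A \<in> \<C>" for A
        using that \<C> z up_trans by blast
      ultimately show ?thesis
        by blast
    qed
  qed
  then obtain m where m: "(x, m) \<in> R"
    and minimal: "\<And>y. (x, y) \<in> R \<Longrightarrow> R `` {y} \<subseteq> R `` {m} \<Longrightarrow> R `` {y} = R `` {m}"
    by blast
  have "m \<in> qmax T R"
    unfolding qmax_def
  proof (intro CollectI conjI allI impI)
    show m_top: "m \<in> topspace T"
      using m R_sub by blast
    fix w assume "(m, w) \<in> R"
    with m trans have "R `` {w} = R `` {m}"
      by (intro minimal up_trans) (blast dest: transD)
    then show "(w, m) \<in> R"
      using self_in_up[OF m_top] by blast
  qed
  with m that show thesis
    by blast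
qed

lemma eval_subset_topspace: "(\<And>n. V n \<subseteq> topspace T) \<Longrightarrow> eval T R E V p \<subseteq> topspace T"
  by (induction p) auto

lemma ptv_eval: "x \<in> topspace T \<Longrightarrow> ptv (\<lambda>q. x \<in> eval T R E V q) p \<longleftrightarrow> x \<in> eval T R E V p"
  by (induction p) auto

lemma eval_subst: "eval T R E V (subst s p) = eval T R E (\<lambda>n. eval T R E V (s n)) p"
  by (induction p) auto

lemma valid_inI:
  assumes "\<And>V x. \<forall>n. clopenin T (V n) \<Longrightarrow> x \<in> topspace T \<Longrightarrow> x \<in> eval T R E V p"
  shows "valid_in T R E p"
  unfolding valid_in_def
proof (intro allI impI)
  fix V :: "nat \<Rightarrow> 'a set" assume V: "\<forall>n. clopenin T (V n)"
  then have "eval T R E V p \<subseteq> topspace T"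
    using eval_subset_topspace clopenin_subset_topspace by metis
  with assms V show "eval T R E V p = topspace T"
    by blast
qed

lemma valid_inD:
  "valid_in T R E p \<Longrightarrow> \<forall>n. clopenin T (V n) \<Longrightarrow> x \<in> topspace T \<Longrightarrow> x \<in> eval T R E V p"
  unfolding valid_in_def by blast

locale descriptive_frame =
  fixes T :: "'a topology" and R E :: "'a rel"
  assumes frame: "descriptive_MS4_frame T R E"
begin

lemma
  shows compact: "compact_space T"
    and zero_dimensional: "zero_dimensional_space T"
    and R_sub: "R \<subseteq> topspace T \<times> topspace T"
    and R_refl: "refl_on (topspace T) R"
    and R_trans: "trans R"
    and R_continuous: "continuous_rel T R"
    and E_sub: "E \<subseteq> topspace T \<times> topspace T"
    and E_equiv: "equiv (topspace T) E"
    and E_continuous: "continuous_rel T E"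
    and commute: "\<And>x y z. (x, y) \<in> E \<Longrightarrow> (y, z) \<in> R \<Longrightarrow> \<exists>u. (x, u) \<in> R \<and> (u, z) \<in> E"
  using frame unfolding descriptive_MS4_frame_def stone_space_def by blast+

lemma R_reflexive: "x \<in> topspace T \<Longrightarrow> (x, x) \<in> R"
  using R_refl by (rule refl_onD)

lemma R_transitive: "(x, y) \<in> R \<Longrightarrow> (y, z) \<in> R \<Longrightarrow> (x, z) \<in> R"
  using R_trans by (rule transD)

lemma E_reflexive: "x \<in> topspace T \<Longrightarrow> (x, x) \<in> E"
  using E_equiv by (meson equiv_def refl_onD)

lemma E_symmetric: "(x, y) \<in> E \<Longrightarrow> (y, x) \<in> E"
  using E_equiv by (meson equiv_def symD)

lemma E_transitive: "(x, y) \<in> E \<Longrightarrow> (y, z) \<in> E \<Longrightarrow> (x, z) \<in> E"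
  using E_equiv by (meson equiv_def transD)

lemma R_closed_image: "y \<in> topspace T \<Longrightarrow> closedin T (R `` {y})"
  using R_continuous unfolding continuous_rel_def by blast

lemma eval_clopen: "(\<And>n. clopenin T (V n)) \<Longrightarrow> clopenin T (eval T R E V p)"
  by (induction p)
    (simp_all add: clopenin_empty clopenin_Un clopenin_diff clopenin_topspace
      clopenin_box[OF R_sub R_continuous] clopenin_box[OF E_sub E_continuous])

lemma eval_Dia: "eval T R E V (Dia p) = {x. \<exists>y. (x, y) \<in> R \<and> y \<in> eval T R E V p}"
  using R_sub by (auto simp: Dia_def Neg_def)

lemma eval_Ex: "eval T R E V (Ex p) = {x. \<exists>y. (x, y) \<in> E \<and> y \<in> eval T R E V p}"
  using E_sub by (auto simp: Ex_def Neg_def)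

lemma eval_Kur_ax:
  "x \<in> eval T R E V Kur_ax \<longleftrightarrow> x \<in> topspace T \<and>
     ((\<forall>y z. (x, y) \<in> R \<longrightarrow> (y, z) \<in> E \<longrightarrow> (\<exists>w. (z, w) \<in> R \<and> R `` {w} \<subseteq> V 0)) \<longrightarrow>
      (\<exists>y. (x, y) \<in> R \<and> E `` {y} \<subseteq> V 0))"
proof -
  have dia_box: "z \<in> eval T R E V (Dia (Box pp)) \<longleftrightarrow> (\<exists>w. (z, w) \<in> R \<and> R `` {w} \<subseteq> V 0)" for z
    using R_sub by (auto simp: eval_Dia)
  have "x \<in> eval T R E V (Box (All (Dia (Box pp)))) \<longleftrightarrow> x \<in> topspace T \<and>
     (\<forall>y z. (x, y) \<in> R \<longrightarrow> (y, z) \<in> E \<longrightarrow> (\<exists>w. (z, w) \<in> R \<and> R `` {w} \<subseteq> V 0))"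
    using R_sub E_sub dia_box by fastforce
  moreover have "x \<in> eval T R E V (Dia (All pp)) \<longleftrightarrow> (\<exists>y. (x, y) \<in> R \<and> E `` {y} \<subseteq> V 0)"
    using R_sub E_sub by (auto simp: eval_Dia)
  ultimately show ?thesis
    unfolding Kur_ax_def eval.simps(3) Un_iff Diff_iff using R_sub by blast
qed

lemma MS4_ext_sound:
  assumes Ax: "\<And>q. q \<in> Ax \<Longrightarrow> valid_in T R E q" and "p \<in> MS4_ext Ax"
  shows "valid_in T R E p"
  using \<open>p \<in> MS4_ext Ax\<close>
proof (induction rule: MS4_ext.induct)
  case (tautI p)
  show ?case
    by (rule valid_inI) (metis ptv_eval tautI taut_def)
next
  case K_Box
  show ?case
    by (rule valid_inI) (use R_sub in auto)
next
  case T_Box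
  show ?case
    by (rule valid_inI) (auto intro: R_reflexive)
next
  case Four_Box
  show ?case
    by (rule valid_inI) (use R_sub in \<open>auto intro: R_transitive\<close>)
next
  case K_All
  show ?case
    by (rule valid_inI) (use E_sub in auto)
next
  case T_All
  show ?case
    by (rule valid_inI) (auto intro: E_reflexive)
next
  case Five_All
  show ?case
    by (rule valid_inI) (auto simp: eval_Ex intro: E_transitive[OF E_symmetric])
next
  case Left_comm
  show ?case
    by (rule valid_inI) (use R_sub E_sub in \<open>auto dest: commute\<close>)
next
  case (extra p)
  then show ?case
    by (rule Ax)
next
  case (MP p q)
  show ?case
  proof (rule valid_inI)
    fix V :: "nat \<Rightarrow> 'a set" and x
    assume V: "\<forall>n. clopenin T (V n)" and x: "x \<in> topspace T"
    have "x \<in> eval T R E V p" "x \<in> eval T R E V (Imp p q)"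
      using valid_inD[OF MP.IH(1) V x] valid_inD[OF MP.IH(2) V x] .
    then show "x \<in> eval T R E V q"
      by simp
  qed
next
  case (Subst p s)
  show ?case
  proof (rule valid_inI)
    fix V :: "nat \<Rightarrow> 'a set" and x
    assume V: "\<forall>n. clopenin T (V n)" and x: "x \<in> topspace T"
    have "\<forall>n. clopenin T (eval T R E V (s n))"
      using V eval_clopen by blast
    then show "x \<in> eval T R E V (subst s p)"
      unfolding eval_subst by (rule valid_inD[OF Subst.IH _ x])
  qed
next
  case (NecBox p)
  show ?case
  proof (rule valid_inI)
    fix V :: "nat \<Rightarrow> 'a set" and x
    assume "\<forall>n. clopenin T (V n)" "x \<in> topspace T"
    then show "x \<in> eval T R E V (Box p)"
      using R_sub valid_inD[OF NecBox.IH] by auto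
  qed
next
  case (NecAll p)
  show ?case
  proof (rule valid_inI)
    fix V :: "nat \<Rightarrow> 'a set" and x
    assume "\<forall>n. clopenin T (V n)" "x \<in> topspace T"
    then show "x \<in> eval T R E V (All p)"
      using E_sub valid_inD[OF NecAll.IH] by auto
  qed
qed

lemma qmax_above:
  assumes "x \<in> topspace T"
  obtains m where "(x, m) \<in> R" "m \<in> qmax T R"
  using compact_space_qmax_above[OF compact R_refl R_trans R_sub _ assms] R_closed_image by blast

lemma qmax_subset_dia_box:
  assumes "qmax T R \<subseteq> p" and z: "z \<in> topspace T"
  obtains w where "(z, w) \<in> R" "R `` {w} \<subseteq> p"
proof -
  obtain m where "(z, m) \<in> R" "m \<in> qmax T R"
    using qmax_above[OF z] .
  moreover have "R `` {m} \<subseteq> p"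
    using assms(1) qmax_successor[OF R_trans R_sub \<open>m \<in> qmax T R\<close>] by blast
  ultimately show thesis
    using that by blast
qed

lemma qmax_separation:
  assumes z: "z \<in> topspace T" "z \<notin> qmax T R"
  obtains p where "clopenin T p" "qmax T R \<subseteq> p" "z \<notin> p"
proof -
  obtain w where zw: "(z, w) \<in> R" "(w, z) \<notin> R"
    using z unfolding qmax_def by blast
  have "openin T (topspace T - R `` {w})"
    using zw(1) R_sub R_closed_image by blast
  then obtain C where C: "clopenin T C" "z \<in> C" "C \<subseteq> topspace T - R `` {w}"
    using zero_dimensional z zw unfolding zero_dimensional_space_def by blast
  define V :: "nat \<Rightarrow> 'a set" where "V = (\<lambda>_. topspace T - C)"
  show thesis
  proof (rule that[of "eval T R E V (Imp (Dia (Box pp)) pp)"])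
    show "clopenin T (eval T R E V (Imp (Dia (Box pp)) pp))"
      using C(1) by (intro eval_clopen) (simp add: V_def clopenin_diff clopenin_topspace)
    show "qmax T R \<subseteq> eval T R E V (Imp (Dia (Box pp)) pp)"
      unfolding qmax_def by (auto simp: eval_Dia)
    have "w \<in> eval T R E V (Box pp)"
      using C(3) zw(1) R_sub by (auto simp: V_def)
    then show "z \<notin> eval T R E V (Imp (Dia (Box pp)) pp)"
      using zw(1) C(2) by (auto simp: eval_Dia V_def)
  qed
qed

lemma local_Kuroda_imp_valid_Kur_ax:
  assumes local_Kuroda: "local_Kuroda T R E"
  shows "valid_in T R E Kur_ax"
proof (rule valid_inI)
  fix V x assume x: "x \<in> topspace T"
  show "x \<in> eval T R E V Kur_ax"
    unfolding eval_Kur_ax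
  proof (intro conjI impI)
    assume hyp: "\<forall>y z. (x, y) \<in> R \<longrightarrow> (y, z) \<in> E \<longrightarrow> (\<exists>w. (z, w) \<in> R \<and> R `` {w} \<subseteq> V 0)"
    obtain m where xm: "(x, m) \<in> R" and m: "m \<in> qmax T R"
      using qmax_above[OF x] .
    then obtain y where my: "(m, y) \<in> R" and Ey: "E `` {y} \<subseteq> qmax T R"
      using local_Kuroda unfolding local_Kuroda_def by blast
    have xy: "(x, y) \<in> R"
      using xm my by (rule R_transitive)
    have "E `` {y} \<subseteq> V 0"
    proof
      fix z assume "z \<in> E `` {y}"
      then obtain w where "(z, w) \<in> R" "R `` {w} \<subseteq> V 0"
        using hyp xy by blast
      moreover have "(w, z) \<in> R"
        using \<open>z \<in> E `` {y}\<close> Ey calculation(1) unfolding qmax_def by blast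
      ultimately show "z \<in> V 0"
        by blast
    qed
    with xy show "\<exists>y. (x, y) \<in> R \<and> E `` {y} \<subseteq> V 0"
      by blast
  qed (fact x)
qed

lemma valid_Kur_axD:
  assumes "valid_in T R E Kur_ax" and x: "x \<in> topspace T"
    and "clopenin T p" "qmax T R \<subseteq> p"
  obtains y where "(x, y) \<in> R" "E `` {y} \<subseteq> p"
proof -
  have "x \<in> eval T R E (\<lambda>_. p) Kur_ax"
    using valid_inD[OF assms(1) _ x] \<open>clopenin T p\<close> by simp
  moreover have "\<exists>w. (z, w) \<in> R \<and> R `` {w} \<subseteq> p" if "z \<in> topspace T" for z
    using qmax_subset_dia_box[OF \<open>qmax T R \<subseteq> p\<close> that] by blast
  ultimately show thesis
    using that E_sub unfolding eval_Kur_ax by blast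
qed

lemma valid_Kur_ax_common_witness:
  assumes Kur: "valid_in T R E Kur_ax" and x: "x \<in> topspace T"
  obtains y where "(x, y) \<in> R" "\<And>p. clopenin T p \<Longrightarrow> qmax T R \<subseteq> p \<Longrightarrow> E `` {y} \<subseteq> p"
proof -
  define K where "K p = R `` {x} \<inter> {y \<in> topspace T. \<forall>z. (y, z) \<in> E \<longrightarrow> z \<in> p}" for p
  define \<P> where "\<P> = {p. clopenin T p \<and> qmax T R \<subseteq> p}"
  have top_in_\<P>: "topspace T \<in> \<P>"
    unfolding \<P>_def qmax_def using clopenin_topspace by blast
  have K_nonempty: "K p \<noteq> {}" if "p \<in> \<P>" for p
  proof -
    obtain y where "(x, y) \<in> R" "E `` {y} \<subseteq> p"
      using valid_Kur_axD[OF Kur x] \<open>p \<in> \<P>\<close> unfolding \<P>_def by blast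
    then have "y \<in> K p"
      using R_sub unfolding K_def by blast
    then show ?thesis
      by blast
  qed
  have "\<Inter>(K ` \<P>) \<noteq> {}"
  proof (rule compact_space_Inter_directed[OF compact])
    show "K ` \<P> \<noteq> {}"
      using top_in_\<P> by blast
  next
    fix C assume "C \<in> K ` \<P>"
    then obtain p where "p \<in> \<P>" "C = K p"
      by blast
    moreover have "clopenin T {y \<in> topspace T. \<forall>z. (y, z) \<in> E \<longrightarrow> z \<in> p}"
      using clopenin_box[OF E_sub E_continuous] \<open>p \<in> \<P>\<close> unfolding \<P>_def by blast
    ultimately show "closedin T C" "C \<noteq> {}"
      using R_closed_image[OF x] K_nonempty unfolding K_def clopenin_def by blast+
  next
    fix A B assume "A \<in> K ` \<P>" "B \<in> K ` \<P>"
    then obtain p q where "p \<in> \<P>" "q \<in> \<P>" "A = K p" "B = K q"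
      by blast
    moreover have "p \<inter> q \<in> \<P>" "K (p \<inter> q) \<subseteq> K p \<inter> K q"
      using calculation clopenin_Int unfolding \<P>_def K_def by blast+
    ultimately show "\<exists>C\<in>K ` \<P>. C \<subseteq> A \<inter> B"
      by blast
  qed
  then obtain y where y: "\<And>p. p \<in> \<P> \<Longrightarrow> y \<in> K p"
    by blast
  show thesis
  proof (rule that)
    show "(x, y) \<in> R"
      using y[OF top_in_\<P>] unfolding K_def by blast
    show "E `` {y} \<subseteq> p" if "clopenin T p" "qmax T R \<subseteq> p" for p
      using y[of p] that unfolding K_def \<P>_def by blast
  qed
qed

lemma valid_Kur_ax_imp_local_Kuroda:
  assumes Kur: "valid_in T R E Kur_ax"
  shows "local_Kuroda T R E"
  unfolding local_Kuroda_def
proof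
  fix x assume x_qmax: "x \<in> qmax T R"
  then have x: "x \<in> topspace T"
    unfolding qmax_def by blast
  obtain y where xy: "(x, y) \<in> R"
    and Ey: "\<And>p. clopenin T p \<Longrightarrow> qmax T R \<subseteq> p \<Longrightarrow> E `` {y} \<subseteq> p"
    using valid_Kur_ax_common_witness[OF Kur x] by blast
  have "E `` {y} \<subseteq> qmax T R"
  proof
    fix z assume z: "z \<in> E `` {y}"
    show "z \<in> qmax T R"
    proof (rule ccontr)
      assume "z \<notin> qmax T R"
      then obtain p where "clopenin T p" "qmax T R \<subseteq> p" "z \<notin> p"
        using qmax_separation z E_sub by blast
      then show False
        using Ey z by blast
    qed
  qed
  moreover have "(y, x) \<in> R"
    using x_qmax xy unfolding qmax_def by blast
  ultimately show "\<exists>y. (x, y) \<in> R \<and> (y, x) \<in> R \<and> E `` {y} \<subseteq> qmax T R"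
    using xy by blast
qed

end

theorem theorem4p12:
  fixes T :: "'a topology" and R E :: "'a rel"
  assumes "descriptive_MS4_frame T R E"
  shows "validates T R E LKur \<longleftrightarrow> local_Kuroda T R E"
proof -
  interpret descriptive_frame T R E
    by (rule descriptive_frame.intro) (fact assms)
  have "validates T R E LKur \<longleftrightarrow> valid_in T R E Kur_ax"
    unfolding validates_def LKur_def
    using MS4_ext.extra[of Kur_ax "{Kur_ax}"] MS4_ext_sound[of "{Kur_ax}"] by blast
  also have "\<dots> \<longleftrightarrow> local_Kuroda T R E"
    using local_Kuroda_imp_valid_Kur_ax valid_Kur_ax_imp_local_Kuroda by blast
  finally show ?thesis .
qed

end
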